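(* Let $\mathcal{E}=\{e_1,\dots,e_n\}$ be an orthonormal basis for $\mathbb{R}^n$, let $k\le[(n+1)/2]$ and let $u_1\in\mathbb{R}^n$ be a unit vector with $|\mathrm{supp}(u_1)|=k$. Then $u_1$ can be extended to an orthonormal set $\{u_1,\dots,u_k\}$ such that $M=\mathrm{span}\{u_1,\dots,u_k\}$ is a $k$-dimensional maximal $\mathcal{E}$-PR subspace.
   Context: $[a]$ is the integer part of $a$. For $x=\sum_{i=1}^n\alpha_ie_i$, $\mathrm{supp}(x)=\{i:\alpha_i\neq0\}$. A subspace $M$ is an $\mathcal{E}$-PR subspace if $\{P_Me_i\}_{i=1}^n$ (with $P_M$ the orthogonal projection onto $M$) spans $M$ and whenever $x,y\in M$ satisfy $|\langle x,P_Me_i\rangle|=|\langle y,P_Me_i\rangle|$ for all $i$, then $x=\pm y$. It is maximal if it is not a proper subspace of another $\mathcal{E}$-PR subspace. *)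

theory Defs
  imports "HOL-Analysis.Analysis"
begin

definition orth_proj :: "('a::real_inner) set \<Rightarrow> 'a \<Rightarrow> 'a" where
  "orth_proj M x = (THE y. y \<in> M \<and> (\<forall>z\<in>M. orthogonal (x - y) z))"

definition supp :: "('i \<Rightarrow> 'a::real_inner) \<Rightarrow> 'a \<Rightarrow> 'i set" where
  "supp e x = {i. x \<bullet> e i \<noteq> 0}"

definition is_PR :: "('i \<Rightarrow> 'a::real_inner) \<Rightarrow> 'a set \<Rightarrow> bool" where
  "is_PR e M \<longleftrightarrow> subspace M \<and>
     span (range (\<lambda>i. orth_proj M (e i))) = M \<and>
     (\<forall>x\<in>M. \<forall>y\<in>M. (\<forall>i. \<bar>x \<bullet> orth_proj M (e i)\<bar> = \<bar>y \<bullet> orth_proj M (e i)\<bar>)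
        \<longrightarrow> x = y \<or> x = - y)"

definition is_max_PR :: "('i \<Rightarrow> 'a::real_inner) \<Rightarrow> 'a set \<Rightarrow> bool" where
  "is_max_PR e M \<longleftrightarrow> is_PR e M \<and> \<not> (\<exists>M'. is_PR e M' \<and> M \<subset> M')"

end

(* Let S = supp u1 and k = card S, and choose distinct nodes t_i, positive for i in S and negative
   otherwise. For a real polynomial F of degree < k let v_F be the vector with coordinates
   u1_i F(t_i) for i in S and F'(t_i) otherwise; these vectors form a k-dimensional space M
   containing u1 (take F = 1). A nonzero v_F either has support S (F constant) or at most k - 1
   zero coordinates: by Rolle's theorem m positive zeros of F give m - 1 positive zeros of F',
   and F' has at most k - 2 zeros altogether. Since n >= 2k - 1, no two nonzero vectors of M have
   disjoint supports, which is equivalent to M being E-PR. A subspace strictly containing M has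
   dimension > card S and therefore contains a nonzero vector vanishing on S, whose support is
   disjoint from that of u1; so M is maximal. An orthonormal basis of M starting with u1 gives
   the u_i. *)

theory Submission
  imports Defs
begin

lemma supp_0 [simp]: "supp e 0 = {}"
  by (simp add: supp_def)

lemma supp_add_Int_supp_diff:
  assumes "\<And>i. \<bar>x \<bullet> e i\<bar> = \<bar>y \<bullet> e i\<bar>"
  shows "supp e (x + y) \<inter> supp e (x - y) = {}"
proof -
  have "(x \<bullet> e i)\<^sup>2 = (y \<bullet> e i)\<^sup>2" for i
    using assms by (metis power2_abs)
  then have "((x + y) \<bullet> e i) * ((x - y) \<bullet> e i) = 0" for i
    by (simp add: inner_add_left inner_diff_left power2_eq_square algebra_simps)
  then show ?thesis
    by (auto simp: supp_def)
qed

lemma orth_proj: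
  fixes M :: "'a::euclidean_space set"
  assumes "subspace M"
  shows orth_proj_in: "orth_proj M x \<in> M"
    and orth_proj_orthogonal: "z \<in> M \<Longrightarrow> orthogonal (x - orth_proj M x) z"
proof -
  have "span M = M"
    using assms by (simp add: span_eq_iff)
  then obtain y q where y: "y \<in> M" and q: "\<And>w. w \<in> M \<Longrightarrow> orthogonal q w" and x: "x = y + q"
    using orthogonal_subspace_decomp_exists[of M x] by metis
  have "\<exists>!y. y \<in> M \<and> (\<forall>w\<in>M. orthogonal (x - y) w)"
  proof
    show "y \<in> M \<and> (\<forall>w\<in>M. orthogonal (x - y) w)"
      using y q x by auto
  next
    fix y' assume y': "y' \<in> M \<and> (\<forall>w\<in>M. orthogonal (x - y') w)"
    then have "y' - y \<in> M"
      using y assms by (simp add: subspace_diff)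
    then have "orthogonal (x - y') (y' - y)" "orthogonal (x - y) (y' - y)"
      using y' q x by auto
    then have "(y' - y) \<bullet> (y' - y) = 0"
      by (simp add: orthogonal_def inner_diff_left inner_diff_right algebra_simps)
    then show "y' = y"
      by simp
  qed
  then have "orth_proj M x \<in> M \<and> (\<forall>w\<in>M. orthogonal (x - orth_proj M x) w)"
    unfolding orth_proj_def by (rule theI')
  then show "orth_proj M x \<in> M" "z \<in> M \<Longrightarrow> orthogonal (x - orth_proj M x) z"
    by auto
qed

lemma inner_orth_proj:
  fixes M :: "'a::euclidean_space set"
  assumes "subspace M" "z \<in> M"
  shows "z \<bullet> orth_proj M x = z \<bullet> x"
  using orth_proj_orthogonal[OF assms, of x]
  by (metis inner_commute inner_diff_left orthogonal_def right_minus_eq)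

lemma orthonormal_list_extending:
  fixes M :: "'a::euclidean_space set"
  assumes M: "subspace M" and v: "v \<in> M" "norm v = 1"
  obtains vs where "distinct (v # vs)" "pairwise orthogonal (set (v # vs))"
    "\<And>w. w \<in> set (v # vs) \<Longrightarrow> norm w = 1" "span (set (v # vs)) = M"
proof -
  define N where "N = M \<inter> {x. orthogonal v x}"
  have "subspace N"
    unfolding N_def using M by (intro subspace_inter subspace_orthogonal_to_vector)
  then obtain B where B: "B \<subseteq> N" "pairwise orthogonal B" "\<And>x. x \<in> B \<Longrightarrow> norm x = 1"
    "independent B" "span B = N"
    using orthonormal_basis_subspace by metis
  obtain vs where vs: "set vs = B" "distinct vs"
    using finite_distinct_list[OF independent_imp_finite[OF B(4)]] by blast
  have "v \<noteq> 0"
    using v(2) by auto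
  then have "v \<notin> B"
    using B(1) by (auto simp: N_def orthogonal_def)
  have "pairwise orthogonal (insert v B)"
    using B(1,2) by (auto simp: pairwise_insert N_def orthogonal_commute)
  moreover have "span (insert v B) = M"
  proof
    show "span (insert v B) \<subseteq> M"
      using M v(1) B(1) unfolding N_def by (intro span_minimal) auto
    show "M \<subseteq> span (insert v B)"
    proof
      fix x assume x: "x \<in> M"
      have "v \<bullet> v = 1"
        using v(2) by (simp add: norm_eq_1)
      then have "x - (x \<bullet> v) *\<^sub>R v \<in> N"
        using M x v(1) by (auto simp: N_def orthogonal_def inner_diff_right subspace_diff
            subspace_scale inner_commute)
      then have "x - (x \<bullet> v) *\<^sub>R v \<in> span (insert v B)"
        using B(5) span_mono[of B "insert v B"] by blast
      moreover have "(x \<bullet> v) *\<^sub>R v \<in> span (insert v B)"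
        by (simp add: span_base span_scale)
      ultimately show "x \<in> span (insert v B)"
        using span_add by fastforce
    qed
  qed
  ultimately show ?thesis
    using that[of vs] vs \<open>v \<notin> B\<close> B(3) v(2) by auto
qed

lemma inner_nth_orthonormal_list:
  fixes vs :: "'a::real_inner list"
  assumes "distinct vs" "pairwise orthogonal (set vs)" "\<And>w. w \<in> set vs \<Longrightarrow> norm w = 1"
    and "i < length vs" "j < length vs"
  shows "vs ! i \<bullet> vs ! j = (if i = j then 1 else 0)"
proof (cases "i = j")
  case True
  then show ?thesis
    using assms(3)[of "vs ! i"] assms(4) by (simp add: norm_eq_1)
next
  case False
  then have "vs ! i \<noteq> vs ! j"
    using assms(1,4,5) by (simp add: nth_eq_iff_index_eq)
  then show ?thesis
    using assms(2,4,5) False by (auto simp: pairwise_def orthogonal_def)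
qed

lemma exists_orthonormal_basis_extending:
  fixes M :: "'a::euclidean_space set"
  assumes "subspace M" "v \<in> M" "norm v = 1"
  obtains w :: "nat \<Rightarrow> 'a" where "w 1 = v"
    "\<And>i j. i \<in> {1..dim M} \<Longrightarrow> j \<in> {1..dim M} \<Longrightarrow> w i \<bullet> w j = (if i = j then 1 else 0)"
    "span (w ` {1..dim M}) = M"
proof -
  obtain vs where vs: "distinct (v # vs)" "pairwise orthogonal (set (v # vs))"
    "\<And>w. w \<in> set (v # vs) \<Longrightarrow> norm w = 1" "span (set (v # vs)) = M"
    by (rule orthonormal_list_extending[OF assms]) auto
  have "0 \<notin> set (v # vs)"
    using vs(3) by force
  then have "independent (set (v # vs))"
    using vs(2) by (intro pairwise_orthogonal_independent)
  then have len: "length (v # vs) = dim M"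
    using vs(1,4) dim_span_eq_card_independent distinct_card by metis
  define w where "w j = (v # vs) ! (j - 1)" for j
  have "w ` {1..dim M} = set (v # vs)"
  proof
    show "w ` {1..dim M} \<subseteq> set (v # vs)"
      unfolding w_def len[symmetric] by (rule image_subsetI, rule nth_mem) auto
    show "set (v # vs) \<subseteq> w ` {1..dim M}"
    proof
      fix x assume "x \<in> set (v # vs)"
      then obtain n where "n < length (v # vs)" "x = (v # vs) ! n"
        by (metis in_set_conv_nth)
      then show "x \<in> w ` {1..dim M}"
        unfolding len by (intro image_eqI[of _ _ "Suc n"]) (auto simp: w_def)
    qed
  qed
  moreover have "w i \<bullet> w j = (if i = j then 1 else 0)" if "i \<in> {1..dim M}" "j \<in> {1..dim M}" for i j
    using inner_nth_orthonormal_list[OF vs(1-3), of "i - 1" "j - 1"] that len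
    by (auto simp: w_def)
  ultimately show ?thesis
    using that[of w] vs(4) by (simp add: w_def)
qed

section \<open>Zeros of a polynomial and of its derivative\<close>

definition polysum :: "(nat \<Rightarrow> real) \<Rightarrow> nat \<Rightarrow> real \<Rightarrow> real" where
  "polysum c k x = (\<Sum>j<k. c j * x ^ j)"

definition polysum_deriv :: "(nat \<Rightarrow> real) \<Rightarrow> nat \<Rightarrow> real \<Rightarrow> real" where
  "polysum_deriv c k x = (\<Sum>j<k. c j * (real j * x ^ (j - 1)))"

lemma polysum_delta: "polysum (\<lambda>l. if l = j then 1 else 0) k x = (if j < k then x ^ j else 0)"
  by (simp add: polysum_def if_distrib[of "\<lambda>a. a * _"] cong: if_cong)

lemma polysum_deriv_delta:
  "polysum_deriv (\<lambda>l. if l = j then 1 else 0) k x = (if j < k then real j * x ^ (j - 1) else 0)"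
  by (simp add: polysum_deriv_def if_distrib[of "\<lambda>a. a * _"] cong: if_cong)

lemma has_real_derivative_polysum:
  "(polysum c k has_real_derivative polysum_deriv c k x) (at x)"
  unfolding polysum_def[abs_def] polysum_deriv_def
  by (intro DERIV_sum DERIV_cmult) (simp add: DERIV_pow)

lemma polysum_deriv_zeros:
  assumes "\<exists>j\<in>{1..<k}. c j \<noteq> 0"
  shows "finite {x. polysum_deriv c k x = 0}" and "card {x. polysum_deriv c k x = 0} \<le> k - 2"
proof -
  obtain j where j: "1 \<le> j" "j < k" "c j \<noteq> 0"
    using assms by auto
  define p where "p = k - 2"
  have k: "k = Suc (Suc p)"
    unfolding p_def using j by linarith
  define d where "d i = c (Suc i) * real (Suc i)" for i
  have "polysum_deriv c k x = (\<Sum>i\<le>p. d i * x ^ i)" for x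
    unfolding polysum_deriv_def k d_def
    by (subst sum.lessThan_Suc_shift)
      (simp add: lessThan_Suc_atMost[symmetric] mult.assoc del: sum.lessThan_Suc)
  then have roots: "{x. polysum_deriv c k x = 0} = {x. (\<Sum>i\<le>p. d i * x ^ i) = 0}"
    by simp
  have "d (j - 1) \<noteq> 0" "j - 1 \<le> p"
    using j k by (auto simp: d_def)
  then show "finite {x. polysum_deriv c k x = 0}" "card {x. polysum_deriv c k x = 0} \<le> k - 2"
    unfolding roots p_def by (rule polyfun_roots_finite, rule polyfun_roots_card)
qed

lemma Rolle_deriv:
  fixes f f' :: "real \<Rightarrow> real"
  assumes "a < b" "f a = f b" "\<And>x. (f has_real_derivative f' x) (at x)"
  obtains z where "a < z" "z < b" "f' z = 0"
proof -
  have "\<exists>z. a < z \<and> z < b \<and> (f has_real_derivative 0) (at z)"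
  proof (rule Rolle[OF assms(1,2)])
    show "continuous_on {a..b} f"
      by (intro continuous_at_imp_continuous_on ballI DERIV_isCont[OF assms(3)])
    show "f differentiable at x" for x
      using assms(3) real_differentiable_def by blast
  qed
  then show ?thesis
    using that DERIV_unique[OF assms(3)] by blast
qed

lemma exists_deriv_zeros_between_zeros:
  fixes f f' :: "real \<Rightarrow> real"
  assumes deriv: "\<And>x. (f has_real_derivative f' x) (at x)"
    and "finite B" "B \<noteq> {}" "\<And>b. b \<in> B \<Longrightarrow> f b = 0"
  shows "\<exists>R. finite R \<and> card B \<le> card R + 1 \<and> R \<subseteq> {Min B<..<Max B} \<and> (\<forall>r\<in>R. f' r = 0)"
  using assms(2-4)
proof (induction B rule: finite_linorder_max_induct)
  case empty
  then show ?case by simp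
next
  case (insert b B)
  show ?case
  proof (cases "B = {}")
    case True
    then show ?thesis by (intro exI[of _ "{}"]) auto
  next
    case False
    with insert obtain R where R: "finite R" "card B \<le> card R + 1" "R \<subseteq> {Min B<..<Max B}"
      "\<forall>r\<in>R. f' r = 0"
      by auto
    have max: "Max B < b"
      using insert False by auto
    obtain z where z: "Max B < z" "z < b" "f' z = 0"
      using Rolle_deriv[OF max _ deriv] insert False by auto
    have "Min B \<le> Max B"
      using insert.hyps(1) False by simp
    then have "Min (insert b B) = Min B" "Max (insert b B) = b"
      using insert.hyps(1) False max by (simp_all add: Min_insert Max_insert)
    moreover have "insert z R \<subseteq> {Min B<..<b}"
      using R(3) z(1,2) \<open>Min B \<le> Max B\<close> by fastforce
    ultimately have between: "insert z R \<subseteq> {Min (insert b B)<..<Max (insert b B)}"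
      by simp
    have "b \<notin> B" "z \<notin> R"
      using insert.hyps(2) R(3) z(1) by auto
    then have "card (insert b B) \<le> card (insert z R) + 1"
      using R(1,2) insert.hyps(1) by simp
    then show ?thesis
      using R(1,4) z(3) between by (intro exI[of _ "insert z R"]) simp
  qed
qed

text \<open>Rolle's theorem yields \<open>card P - 1\<close> zeros of the derivative strictly between the
  zeros in \<open>P\<close>, hence disjoint from \<open>N\<close>.\<close>

lemma card_zeros_add_card_deriv_zeros_le:
  assumes nonconst: "\<exists>j\<in>{1..<k}. c j \<noteq> 0"
    and P: "finite P" "\<And>x. x \<in> P \<Longrightarrow> polysum c k x = 0"
    and N: "\<And>x. x \<in> N \<Longrightarrow> polysum_deriv c k x = 0"
    and left: "\<And>x y. x \<in> N \<Longrightarrow> y \<in> P \<Longrightarrow> x < y"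
  shows "card P + card N \<le> k - 1"
proof -
  let ?D = "{x. polysum_deriv c k x = 0}"
  have D: "finite ?D" "card ?D \<le> k - 2"
    using polysum_deriv_zeros[OF nonconst] by auto
  have "2 \<le> k"
    using nonconst by auto
  have "N \<subseteq> ?D"
    using N by auto
  then have finN: "finite N"
    using D(1) by (rule finite_subset)
  show ?thesis
  proof (cases "P = {}")
    case True
    have "card N \<le> card ?D"
      using D(1) \<open>N \<subseteq> ?D\<close> by (rule card_mono)
    then show ?thesis
      using True D(2) by simp
  next
    case False
    obtain R where R: "finite R" "card P \<le> card R + 1" "R \<subseteq> {Min P<..<Max P}"
      "\<forall>r\<in>R. polysum_deriv c k r = 0"
      using exists_deriv_zeros_between_zeros[OF has_real_derivative_polysum P(1) False P(2)]
      by blast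
    have "N \<inter> R = {}"
    proof (intro equals0I)
      fix x assume "x \<in> N \<inter> R"
      then have "x < Min P" "Min P < x"
        using left Min_in[OF P(1) False] R(3) by auto
      then show False
        by simp
    qed
    then have "card N + card R = card (N \<union> R)"
      using finN R(1) by (simp add: card_Un_disjoint)
    also have "\<dots> \<le> card ?D"
      using D(1) N R(4) by (intro card_mono) auto
    finally show ?thesis
      using R(2) D(2) \<open>2 \<le> k\<close> by linarith
  qed
qed

section \<open>Phase retrievability relative to an orthonormal basis\<close>

locale orthonormal_basis =
  fixes e :: "'i::finite \<Rightarrow> 'a::euclidean_space"
  assumes inner_basis: "e i \<bullet> e j = (if i = j then 1 else 0)"
    and span_basis: "span (range e) = UNIV"
begin

lemma eq_if_inner_basis_eq:
  assumes "\<And>i. x \<bullet> e i = y \<bullet> e i"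
  shows "x = y"
proof -
  have "orthogonal (x - y) (e i)" for i
    using assms by (simp add: orthogonal_def inner_diff_left)
  then have "orthogonal (x - y) (x - y)"
    using orthogonal_to_span[of "x - y" "range e" "x - y"] span_basis by blast
  then show ?thesis
    by (simp add: orthogonal_def)
qed

lemma inner_sum_basis: "(\<Sum>l\<in>A. c l *\<^sub>R e l) \<bullet> e i = (if i \<in> A then c i else 0)"
  by (simp add: inner_sum_left inner_basis if_distrib[of "(*) _"] sum.delta' cong: if_cong)

lemma span_orth_proj_basis:
  assumes "subspace M"
  shows "span (range (\<lambda>i. orth_proj M (e i))) = M"
proof
  let ?P = "range (\<lambda>i. orth_proj M (e i))"
  show sub: "span ?P \<subseteq> M"
    by (rule span_minimal) (auto simp: orth_proj_in[OF assms] assms)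
  show "M \<subseteq> span ?P"
  proof
    fix x assume x: "x \<in> M"
    obtain p q where p: "p \<in> span ?P" and q: "\<And>w. w \<in> span ?P \<Longrightarrow> orthogonal q w"
      and xpq: "x = p + q"
      using orthogonal_subspace_decomp_exists by blast
    have "q \<in> M"
      using x p sub assms xpq by (metis add_diff_cancel_left' subset_iff subspace_diff)
    then have "q \<bullet> e i = 0 \<bullet> e i" for i
      using q[of "orth_proj M (e i)"] inner_orth_proj[OF assms]
      by (simp add: span_base orthogonal_def)
    then have "q = 0"
      by (rule eq_if_inner_basis_eq)
    then show "x \<in> span ?P"
      using p xpq by simp
  qed
qed

lemma disjoint_supp_if_is_PR:
  assumes pr: "is_PR e M" and xy: "x \<in> M" "y \<in> M" and disj: "supp e x \<inter> supp e y = {}"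
  shows "x = 0 \<or> y = 0"
proof -
  have M: "subspace M"
    using pr by (simp add: is_PR_def)
  have "\<bar>(x + y) \<bullet> orth_proj M (e i)\<bar> = \<bar>(x - y) \<bullet> orth_proj M (e i)\<bar>" for i
  proof -
    have "x \<bullet> e i = 0 \<or> y \<bullet> e i = 0"
      using disj by (auto simp: supp_def)
    then show ?thesis
      using xy by (auto simp: inner_orth_proj[OF M] inner_add_left inner_diff_left)
  qed
  moreover have "\<forall>x\<in>M. \<forall>y\<in>M. (\<forall>i. \<bar>x \<bullet> orth_proj M (e i)\<bar> = \<bar>y \<bullet> orth_proj M (e i)\<bar>)
      \<longrightarrow> x = y \<or> x = - y"
    using pr by (simp add: is_PR_def)
  moreover have "x + y \<in> M" "x - y \<in> M"
    using M xy by (auto simp: subspace_add subspace_diff)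
  ultimately have "x + y = x - y \<or> x + y = - (x - y)"
    by blast
  then have "2 *\<^sub>R y = 0 \<or> 2 *\<^sub>R x = 0"
    by (auto simp: scaleR_2 algebra_simps)
  then show "x = 0 \<or> y = 0"
    by auto
qed

lemma is_PR_if_disjoint_supp:
  assumes M: "subspace M"
    and disj: "\<And>x y. x \<in> M \<Longrightarrow> y \<in> M \<Longrightarrow> supp e x \<inter> supp e y = {} \<Longrightarrow> x = 0 \<or> y = 0"
  shows "is_PR e M"
proof -
  have "x = y \<or> x = - y"
    if xy: "x \<in> M" "y \<in> M" and abs_eq: "\<forall>i. \<bar>x \<bullet> orth_proj M (e i)\<bar> = \<bar>y \<bullet> orth_proj M (e i)\<bar>"
    for x y
  proof -
    have "\<bar>x \<bullet> e i\<bar> = \<bar>y \<bullet> e i\<bar>" for i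
      using abs_eq by (simp add: inner_orth_proj[OF M xy(1)] inner_orth_proj[OF M xy(2)])
    then have "supp e (x + y) \<inter> supp e (x - y) = {}"
      by (rule supp_add_Int_supp_diff)
    moreover have "x + y \<in> M" "x - y \<in> M"
      using M xy by (simp_all add: subspace_add subspace_diff)
    ultimately have "x + y = 0 \<or> x - y = 0"
      using disj by blast
    then show ?thesis
      by (metis add_eq_0_iff2 eq_iff_diff_eq_0)
  qed
  then show "is_PR e M"
    unfolding is_PR_def using M span_orth_proj_basis[OF M] by blast
qed

lemma exists_nonzero_vanishing_on:
  assumes V: "subspace V" and dim: "card S < dim V"
  obtains z where "z \<in> V" "z \<noteq> 0" "supp e z \<inter> S = {}"
proof -
  define f where "f x = (\<Sum>i\<in>S. (x \<bullet> e i) *\<^sub>R e i)" for x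
  have lin: "linear f"
    unfolding f_def
    by (rule linearI) (simp_all add: inner_add_left scaleR_add_left sum.distrib scaleR_sum_right)
  have "f x \<in> span (e ` S)" for x
    unfolding f_def by (rule span_sum, rule span_scale, rule span_base, rule imageI)
  then have "f ` V \<subseteq> span (e ` S)"
    by blast
  then have "dim (f ` V) \<le> card (e ` S)"
    by (rule dim_le_card) simp
  also have "\<dots> \<le> card S"
    by (rule card_image_le) simp
  finally have "dim (f ` V) \<le> card S" .
  moreover have "inj_on f V \<Longrightarrow> dim (f ` V) = dim V"
    using dim_image_eq[OF lin, of V] span_eq_iff[THEN iffD2, OF V] by (simp only:)
  ultimately have "\<not> inj_on f V"
    using dim by linarith
  then obtain z where z: "z \<in> V" "z \<noteq> 0" "f z = 0"
    using linear_inj_on_iff_eq_0[OF lin V] by blast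
  have "z \<bullet> e i = 0" if "i \<in> S" for i
    using inner_sum_basis[of "\<lambda>i. z \<bullet> e i" S i] z(3) that by (simp add: f_def)
  then show ?thesis
    using that z by (auto simp: supp_def)
qed

lemma is_max_PR_if_dim_eq_card_supp:
  assumes pr: "is_PR e M" and u: "u \<in> M" "u \<noteq> 0" and dim: "dim M = card (supp e u)"
  shows "is_max_PR e M"
  unfolding is_max_PR_def
proof (intro conjI pr notI, elim exE conjE)
  fix M' assume pr': "is_PR e M'" and MM': "M \<subset> M'"
  have M': "subspace M'"
    using pr' by (simp add: is_PR_def)
  have "span M = M" "span M' = M'"
    using pr M' by (simp_all add: is_PR_def span_eq_iff)
  then have "card (supp e u) < dim M'"
    using MM' dim_psubset[of M M'] dim by metis
  then obtain z where z: "z \<in> M'" "z \<noteq> 0" "supp e z \<inter> supp e u = {}"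
    by (rule exists_nonzero_vanishing_on[OF M'])
  moreover have "u \<in> M'"
    using u MM' by blast
  ultimately show False
    using disjoint_supp_if_is_PR[OF pr'] u(2) by blast
qed

end

section \<open>The construction\<close>

lemma Int_nonempty_if_small_complements:
  fixes X Y S :: "'i::finite set"
  assumes "S \<noteq> {}" "2 * card S \<le> CARD('i) + 1"
    and X: "X = S \<or> card (- X) < card S" and Y: "Y = S \<or> card (- Y) < card S"
  shows "X \<inter> Y \<noteq> {}"
proof
  assume disj: "X \<inter> Y = {}"
  show False
  proof (cases "X = S")
    case True
    then have "Y \<noteq> S" "card S \<le> card (- Y)"
      using disj assms(1) by (auto intro: card_mono)
    then show False
      using Y by simp
  next
    case False
    then have cX: "card (- X) < card S"
      using X by simp
    show False
    proof (cases "Y = S")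
      case True
      then have "card S \<le> card (- X)"
        using disj by (auto intro: card_mono)
      then show False
        using cX by simp
    next
      case False
      then have "card (- Y) < card S"
        using Y by simp
      moreover have "CARD('i) \<le> card (- X) + card (- Y)"
        using card_Un_le[of "- X" "- Y"] disj by (simp flip: Compl_Int)
      ultimately show False
        using cX assms(2) by linarith
    qed
  qed
qed

lemma exists_inj_pos_on_neg_off:
  fixes S :: "'i::countable set"
  obtains t :: "'i \<Rightarrow> real" where "inj t" "\<And>i. i \<in> S \<Longrightarrow> 0 < t i" "\<And>i. i \<notin> S \<Longrightarrow> t i < 0"
proof
  define t where "t i = (if i \<in> S then 1 else -1) * (real (to_nat i) + 1)" for i
  show pos: "0 < t i" if "i \<in> S" for i
    using that by (simp add: t_def)
  show neg: "t i < 0" if "i \<notin> S" for i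
    using that by (simp add: t_def)
  show "inj t"
  proof (rule injI)
    fix i j assume t_eq: "t i = t j"
    then have "i \<in> S \<longleftrightarrow> j \<in> S"
      using pos neg by (metis less_asym)
    then have "to_nat i = to_nat j"
      using t_eq by (auto simp: t_def split: if_splits)
    then show "i = j"
      by simp
  qed
qed

locale PR_construction = orthonormal_basis e for e :: "'i::finite \<Rightarrow> 'a::euclidean_space" +
  fixes u :: 'a and t :: "'i \<Rightarrow> real"
  assumes u_nonzero: "u \<noteq> 0"
    and inj_t: "inj t"
    and t_pos: "i \<in> supp e u \<Longrightarrow> 0 < t i"
    and t_neg: "i \<notin> supp e u \<Longrightarrow> t i < 0"
begin

definition poly_vector :: "(nat \<Rightarrow> real) \<Rightarrow> 'a" where
  "poly_vector c = (\<Sum>i\<in>UNIV.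
     (if i \<in> supp e u then (u \<bullet> e i) * polysum c (card (supp e u)) (t i)
      else polysum_deriv c (card (supp e u)) (t i)) *\<^sub>R e i)"

definition monomial_vector :: "nat \<Rightarrow> 'a" where
  "monomial_vector j = poly_vector (\<lambda>l. if l = j then 1 else 0)"

lemma inner_poly_vector:
  "poly_vector c \<bullet> e i =
     (if i \<in> supp e u then (u \<bullet> e i) * polysum c (card (supp e u)) (t i)
      else polysum_deriv c (card (supp e u)) (t i))"
  unfolding poly_vector_def by (simp add: inner_sum_basis)

lemma supp_nonempty: "supp e u \<noteq> {}"
proof
  assume "supp e u = {}"
  then have "u \<bullet> e i = 0 \<bullet> e i" for i
    by (auto simp: supp_def)
  then have "u = 0"
    by (rule eq_if_inner_basis_eq)
  with u_nonzero show False ..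
qed

lemma inner_monomial_vector:
  assumes "j < card (supp e u)"
  shows "monomial_vector j \<bullet> e i =
    (if i \<in> supp e u then (u \<bullet> e i) * t i ^ j else real j * t i ^ (j - 1))"
  using assms by (simp add: monomial_vector_def inner_poly_vector polysum_delta polysum_deriv_delta)

lemma card_supp_pos: "0 < card (supp e u)"
  using supp_nonempty by (simp add: card_gt_0_iff)

lemma poly_vector_eq_sum: "poly_vector c = (\<Sum>j<card (supp e u). c j *\<^sub>R monomial_vector j)"
proof (rule eq_if_inner_basis_eq)
  fix i
  have "(\<Sum>j<card (supp e u). c j *\<^sub>R monomial_vector j) \<bullet> e i
      = (\<Sum>j<card (supp e u). c j * (monomial_vector j \<bullet> e i))"
    by (simp add: inner_sum_left)
  also have "\<dots> = (\<Sum>j<card (supp e u). c j *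
      (if i \<in> supp e u then (u \<bullet> e i) * t i ^ j else real j * t i ^ (j - 1)))"
    by (intro sum.cong) (simp_all add: inner_monomial_vector)
  also have "\<dots> = poly_vector c \<bullet> e i"
    by (simp add: inner_poly_vector polysum_def polysum_deriv_def sum_distrib_left
        mult.left_commute)
  finally show "poly_vector c \<bullet> e i = (\<Sum>j<card (supp e u). c j *\<^sub>R monomial_vector j) \<bullet> e i"
    by simp
qed

lemma poly_vector_add: "poly_vector c + poly_vector d = poly_vector (\<lambda>j. c j + d j)"
  by (simp add: poly_vector_eq_sum scaleR_add_left sum.distrib)

lemma poly_vector_diff: "poly_vector c - poly_vector d = poly_vector (\<lambda>j. c j - d j)"
  by (simp add: poly_vector_eq_sum scaleR_diff_left sum_subtractf)

lemma scaleR_poly_vector: "r *\<^sub>R poly_vector c = poly_vector (\<lambda>j. r * c j)"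
  by (simp add: poly_vector_eq_sum scaleR_sum_right)

lemma range_poly_vector_eq_span: "range poly_vector = span (monomial_vector ` {..<card (supp e u)})"
proof
  have "monomial_vector j \<in> span (monomial_vector ` {..<card (supp e u)})"
    if "j < card (supp e u)" for j
    using that by (intro span_base) simp
  then show "range poly_vector \<subseteq> span (monomial_vector ` {..<card (supp e u)})"
    unfolding poly_vector_eq_sum by (auto intro!: span_sum span_scale)
  have "poly_vector (\<lambda>_. 0) = 0"
    by (simp add: poly_vector_eq_sum)
  then have "subspace (range poly_vector)"
    unfolding subspace_def by (auto simp: poly_vector_add scaleR_poly_vector intro: range_eqI)
  moreover have "monomial_vector ` {..<card (supp e u)} \<subseteq> range poly_vector"
    by (auto simp: monomial_vector_def)
  ultimately show "span (monomial_vector ` {..<card (supp e u)}) \<subseteq> range poly_vector"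
    by (simp add: span_minimal)
qed

lemma subspace_range_poly_vector: "subspace (range poly_vector)"
  by (simp add: range_poly_vector_eq_span)

lemma poly_vector_const:
  assumes "\<forall>j\<in>{1..<card (supp e u)}. c j = 0"
  shows "poly_vector c = c 0 *\<^sub>R u"
proof (rule eq_if_inner_basis_eq)
  fix i
  have "polysum c (card (supp e u)) x = c 0" for x
  proof -
    have "polysum c (card (supp e u)) x = (\<Sum>j<card (supp e u). if j = 0 then c 0 else 0)"
      unfolding polysum_def using assms by (intro sum.cong) auto
    then show ?thesis
      using card_supp_pos by simp
  qed
  moreover have "polysum_deriv c (card (supp e u)) x = 0" for x
    unfolding polysum_deriv_def using assms by (intro sum.neutral) auto
  ultimately show "poly_vector c \<bullet> e i = (c 0 *\<^sub>R u) \<bullet> e i"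
    by (auto simp: inner_poly_vector supp_def)
qed

lemma card_zeros_poly_vector:
  assumes nonconst: "\<exists>j\<in>{1..<card (supp e u)}. c j \<noteq> 0"
  shows "card (- supp e (poly_vector c)) < card (supp e u)"
proof -
  let ?k = "card (supp e u)"
  define Z where "Z = - supp e (poly_vector c)"
  have "card (t ` (Z \<inter> supp e u)) + card (t ` (Z - supp e u)) \<le> ?k - 1"
  proof (rule card_zeros_add_card_deriv_zeros_le[OF nonconst])
    show "polysum c ?k x = 0" if x: "x \<in> t ` (Z \<inter> supp e u)" for x
    proof -
      obtain i where i: "i \<in> Z" "i \<in> supp e u" "x = t i"
        using x by blast
      then have "poly_vector c \<bullet> e i = 0" "u \<bullet> e i \<noteq> 0"
        by (simp_all add: Z_def supp_def)
      with i show ?thesis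
        by (simp add: inner_poly_vector)
    qed
    show "polysum_deriv c ?k x = 0" if x: "x \<in> t ` (Z - supp e u)" for x
    proof -
      obtain i where i: "i \<in> Z" "i \<notin> supp e u" "x = t i"
        using x by blast
      then have "poly_vector c \<bullet> e i = 0"
        by (simp add: Z_def supp_def)
      with i show ?thesis
        by (simp add: inner_poly_vector)
    qed
    show "x < y" if xy: "x \<in> t ` (Z - supp e u)" "y \<in> t ` (Z \<inter> supp e u)" for x y
    proof -
      obtain i j where "i \<notin> supp e u" "j \<in> supp e u" "x = t i" "y = t j"
        using xy by blast
      then show ?thesis
        using t_pos t_neg by fastforce
    qed
  qed simp
  moreover have "card (t ` (Z \<inter> supp e u)) = card (Z \<inter> supp e u)"
    "card (t ` (Z - supp e u)) = card (Z - supp e u)"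
    by (simp_all add: card_image inj_on_subset[OF inj_t])
  moreover have "card Z = card (Z \<inter> supp e u) + card (Z - supp e u)"
    by (simp add: card_Int_Diff)
  ultimately show ?thesis
    unfolding Z_def[symmetric] using card_supp_pos by linarith
qed

lemma supp_poly_vector_cases:
  assumes "poly_vector c \<noteq> 0"
  shows "supp e (poly_vector c) = supp e u \<or> card (- supp e (poly_vector c)) < card (supp e u)"
proof (cases "\<exists>j\<in>{1..<card (supp e u)}. c j \<noteq> 0")
  case True
  then show ?thesis
    using card_zeros_poly_vector by blast
next
  case False
  then have "poly_vector c = c 0 *\<^sub>R u"
    by (simp add: poly_vector_const)
  then show ?thesis
    using assms by (auto simp: supp_def)
qed

lemma poly_vector_eq_0_imp:
  assumes "poly_vector c = 0" "j < card (supp e u)"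
  shows "c j = 0"
proof (cases "\<exists>j\<in>{1..<card (supp e u)}. c j \<noteq> 0")
  case True
  have "card (supp e u) \<le> CARD('i)"
    by (rule card_mono) auto
  moreover have "CARD('i) < card (supp e u)"
    using card_zeros_poly_vector[OF True] assms(1) by simp
  ultimately show ?thesis
    by linarith
next
  case False
  then have "c 0 = 0"
    using poly_vector_const assms(1) u_nonzero by simp
  then show ?thesis
    using False assms(2) by (cases j) auto
qed

lemma dim_range_poly_vector: "dim (range poly_vector) = card (supp e u)"
proof -
  let ?J = "{..<card (supp e u)}"
  have inj: "inj_on monomial_vector ?J"
  proof (rule inj_onI)
    fix i j assume ij: "i \<in> ?J" "j \<in> ?J" "monomial_vector i = monomial_vector j"
    have "poly_vector (\<lambda>l. (if l = i then 1 else 0) - (if l = j then 1 else 0)) = 0"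
      using ij(3) by (simp add: monomial_vector_def poly_vector_diff[symmetric])
    from poly_vector_eq_0_imp[OF this, of i] show "i = j"
      using ij(1) by (auto split: if_splits)
  qed
  have "independent (monomial_vector ` ?J)"
  proof (rule independent_if_scalars_zero)
    fix f x assume sum: "(\<Sum>x\<in>monomial_vector ` ?J. f x *\<^sub>R x) = 0" and x: "x \<in> monomial_vector ` ?J"
    have "poly_vector (\<lambda>j. f (monomial_vector j)) = 0"
      using sum by (simp add: poly_vector_eq_sum sum.reindex[OF inj])
    then show "f x = 0"
      using x poly_vector_eq_0_imp by auto
  qed simp
  then have "dim (span (monomial_vector ` ?J)) = card ?J"
    using dim_span_eq_card_independent card_image[OF inj] by metis
  then show ?thesis
    by (simp add: range_poly_vector_eq_span)
qed

lemma is_PR_range_poly_vector: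
  assumes small: "2 * card (supp e u) \<le> CARD('i) + 1"
  shows "is_PR e (range poly_vector)"
proof (rule is_PR_if_disjoint_supp[OF subspace_range_poly_vector])
  fix x y assume "x \<in> range poly_vector" "y \<in> range poly_vector"
    and disj: "supp e x \<inter> supp e y = {}"
  then obtain c d where xy: "x = poly_vector c" "y = poly_vector d"
    by blast
  show "x = 0 \<or> y = 0"
  proof (rule ccontr)
    assume "\<not> (x = 0 \<or> y = 0)"
    then have "supp e x = supp e u \<or> card (- supp e x) < card (supp e u)"
      "supp e y = supp e u \<or> card (- supp e y) < card (supp e u)"
      using supp_poly_vector_cases[of c] supp_poly_vector_cases[of d] xy by simp_all
    then have "supp e x \<inter> supp e y \<noteq> {}"
      by (rule Int_nonempty_if_small_complements[OF supp_nonempty small])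
    with disj show False
      by simp
  qed
qed

lemma u_in_range_poly_vector: "u \<in> range poly_vector"
proof -
  have "poly_vector (\<lambda>j. if j = 0 then 1 else 0) = u"
    by (subst poly_vector_const) auto
  then show ?thesis
    by (metis rangeI)
qed

lemma is_max_PR_range_poly_vector:
  assumes "2 * card (supp e u) \<le> CARD('i) + 1"
  shows "is_max_PR e (range poly_vector)"
  using is_PR_range_poly_vector[OF assms] u_in_range_poly_vector u_nonzero dim_range_poly_vector
  by (rule is_max_PR_if_dim_eq_card_supp)

end

theorem theorem4p3:
  fixes e :: "'n::finite \<Rightarrow> real^'n" and u1 :: "real^'n" and k :: nat
  assumes e_orthonormal: "\<And>i j. e i \<bullet> e j = (if i = j then 1 else 0)"
    and e_basis: "span (range e) = UNIV"
    and k_le: "k \<le> (CARD('n) + 1) div 2"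
    and u1_unit: "norm u1 = 1"
    and u1_supp: "card (supp e u1) = k"
  shows "\<exists>u :: nat \<Rightarrow> real^'n.
           u 1 = u1 \<and>
           (\<forall>i\<in>{1..k}. \<forall>j\<in>{1..k}. u i \<bullet> u j = (if i = j then 1 else 0)) \<and>
           dim (span (u ` {1..k})) = k \<and>
           is_max_PR e (span (u ` {1..k}))"
proof -
  interpret orthonormal_basis e
    using e_orthonormal e_basis by unfold_locales
  obtain t :: "'n \<Rightarrow> real" where t: "inj t" "\<And>i. i \<in> supp e u1 \<Longrightarrow> 0 < t i"
    "\<And>i. i \<notin> supp e u1 \<Longrightarrow> t i < 0"
    by (rule exists_inj_pos_on_neg_off[of "supp e u1"]) auto
  interpret PR_construction e u1 t
    using u1_unit t by unfold_locales auto
  have max: "is_max_PR e (range poly_vector)"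
    using k_le u1_supp by (intro is_max_PR_range_poly_vector) linarith
  have dim: "dim (range poly_vector) = k"
    using dim_range_poly_vector u1_supp by simp
  obtain u where u: "u 1 = u1"
    "\<And>i j. i \<in> {1..k} \<Longrightarrow> j \<in> {1..k} \<Longrightarrow> u i \<bullet> u j = (if i = j then 1 else 0)"
    "span (u ` {1..k}) = range poly_vector"
    using exists_orthonormal_basis_extending[OF subspace_range_poly_vector u_in_range_poly_vector
        u1_unit] dim by metis
  have "dim (span (u ` {1..k})) = k" "is_max_PR e (span (u ` {1..k}))"
    unfolding u(3) using dim max by simp_all
  then show ?thesis
    using u(1,2) by blast
qed

end
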